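(* Let $a,b$ be positive integers and $r=[2a,2b,-2b,-2a]$. Then all zeros of $\Delta_{K(r)}(t)$ are real if and only if $a\ge 4b$.
   Context: For a finite sequence $r=[2a_1,2a_2,\dots,2a_n]$ of nonzero even integers, $K(r)$ denotes the 2-bridge knot or link whose associated rational number has the even continued fraction expansion $1/(2a_1-1/(2a_2-\cdots-1/(2a_n)))$ ($K(r)$ is a knot if $n$ is even and a 2-component link if $n$ is odd). Let $M(r)$ be the $n\times n$ integer matrix whose $(k,k)$-entry is $a_k$ ($1\le k\le n$), whose $(k,k+1)$-entry is $1$ ($1\le k\le n-1$), and whose other entries are $0$; it is a Seifert matrix of $K(r)$, and $\Delta_{K(r)}(t)=\det(tM(r)-M(r)^T)$ is the (reduced) Alexander polynomial of $K(r)$ (well defined up to sign). *)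

theory Defs
  imports "Jordan_Normal_Form.Determinant" "HOL-Computational_Algebra.Polynomial" Complex_Main
begin

text \<open>For r = [2a_1,...,2a_n] (a list of nonzero even integers), the Seifert matrix M(r):
  (k,k)-entry a_k, (k,k+1)-entry 1, all others 0 (0-based indices here).\<close>
definition seifert_matrix :: "int list \<Rightarrow> int mat" where
  "seifert_matrix r = mat (length r) (length r)
     (\<lambda>(i,j). if i = j then (r ! i) div 2 else if j = i + 1 then 1 else 0)"

text \<open>Alexander polynomial det(t M - M^T) as an integer polynomial in t.\<close>
definition alexander_poly :: "int list \<Rightarrow> int poly" where
  "alexander_poly r = (let M = seifert_matrix r in
     det (mat (dim_row M) (dim_col M) (\<lambda>(i,j). [: - (M $$ (j,i)), M $$ (i,j) :])))"

end

theory Submission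
  imports Defs "HOL-Computational_Algebra.Fundamental_Theorem_Algebra"
begin

text \<open>With \<open>c = ab\<close> and \<open>k = 2ab - a\<^sup>2\<close> the Alexander polynomial is
  \<open>c\<^sup>2(t-1)\<^sup>4 + k(t-1)\<^sup>2t + t\<^sup>2\<close>, a binary quadratic form in \<open>X = (t-1)\<^sup>2\<close> and \<open>t\<close> of
  discriminant \<open>k\<^sup>2 - 4c\<^sup>2 = a\<^sup>3(a - 4b)\<close>. If the discriminant is negative the form is
  definite, so the polynomial has no real zero at all. Otherwise (and \<open>k \<le> 0\<close>) it
  factors as \<open>c\<^sup>2(X - u\<^sub>1t)(X - u\<^sub>2t)\<close> with \<open>u\<^sub>1, u\<^sub>2 \<ge> 0\<close>, and every zero of
  \<open>(t-1)\<^sup>2 = ut\<close> with \<open>u \<ge> 0\<close> is real.\<close>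

lemma det_mat_Suc_expand_row0:
  "det (mat (Suc n) (Suc n) f) =
     (\<Sum>j<Suc n. f (0,j) * ((-1)^j * det (mat n n (\<lambda>(i,j'). f (Suc i, if j' < j then j' else Suc j')))))"
proof -
  have "mat_delete (mat (Suc n) (Suc n) f) 0 j = mat n n (\<lambda>(i,j'). f (Suc i, if j' < j then j' else Suc j'))"
    if "j < Suc n" for j
    using that by (intro eq_matI) (auto simp: mat_delete_def)
  then show ?thesis
    using laplace_expansion_row[of "mat (Suc n) (Suc n) f" "Suc n" 0]
    by (auto simp: cofactor_def intro!: sum.cong)
qed

lemma alexander_poly_2a_2b:
  fixes a b :: int
  defines "c \<equiv> a * b" and "k \<equiv> 2 * a * b - a^2"
  shows "alexander_poly [2*a, 2*b, -2*b, -2*a] =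
           [: c^2, k - 4*c^2, 6*c^2 - 2*k + 1, k - 4*c^2, c^2 :]"
proof -
  have half: "(- (2*n)) div 2 = - n" "(- (n*2)) div 2 = - n" for n :: int
    by simp_all
  have "poly (alexander_poly [2*a, 2*b, -2*b, -2*a]) x = c^2*(x-1)^4 + k*(x-1)^2*x + x^2" for x
    unfolding alexander_poly_def seifert_matrix_def Let_def c_def k_def
    by (simp add: numeral_eq_Suc det_mat_Suc_expand_row0 half)
       (simp add: algebra_simps power2_eq_square power4_eq_xxxx)
  then have "poly (alexander_poly [2*a, 2*b, -2*b, -2*a]) =
               poly [: c^2, k - 4*c^2, 6*c^2 - 2*k + 1, k - 4*c^2, c^2 :]"
    by (auto simp: algebra_simps power2_eq_square power4_eq_xxxx)
  then show ?thesis
    by (simp add: poly_eq_poly_eq_iff)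
qed

lemma in_Reals_if_power2_nonneg_real:
  fixes w :: complex
  assumes "w^2 = of_real r" and "r \<ge> 0"
  shows "w \<in> \<real>"
proof -
  have "(w - of_real (sqrt r)) * (w + of_real (sqrt r)) = w^2 - of_real (sqrt r)^2"
    by (simp add: algebra_simps power2_eq_square)
  also have "\<dots> = 0"
    using assms by (simp flip: of_real_power)
  finally show ?thesis
    by (auto simp: add_eq_0_iff2)
qed

lemma zero_of_quadratic_real:
  fixes z :: complex
  assumes "(z-1)^2 = of_real u * z" and "u \<ge> 0"
  shows "z \<in> \<real>"
proof -
  have "(z - of_real (1 + u/2))^2 = (z-1)^2 - of_real u * z + of_real (u + u^2/4)"
    by (simp add: algebra_simps power2_eq_square)
  also have "\<dots> = of_real (u + u^2/4)"
    using assms by simp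
  finally have "z - of_real (1 + u/2) \<in> \<real>"
    by (rule in_Reals_if_power2_nonneg_real) (use assms in simp)
  then have "z - of_real (1 + u/2) + of_real (1 + u/2) \<in> \<real>"
    by (intro Reals_add) auto
  then show ?thesis
    by simp
qed

lemma quartic_no_real_zero:
  fixes c k :: real and z :: complex
  assumes "c \<noteq> 0" and "k^2 < 4*c^2" and "z \<in> \<real>"
  shows "of_real c^2*(z-1)^4 + of_real k*(z-1)^2*z + z^2 \<noteq> 0"
proof -
  obtain x where z: "z = of_real x"
    using assms(3) by (auto elim: Reals_cases)
  define X where "X = (x-1)^2"
  have "4*c^2*(c^2*(x-1)^4 + k*(x-1)^2*x + x^2) = (2*c^2*X + k*x)^2 + (4*c^2 - k^2)*x^2"
    unfolding X_def by (simp add: algebra_simps power2_eq_square power4_eq_xxxx)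
  moreover have "(2*c^2*X + k*x)^2 + (4*c^2 - k^2)*x^2 > 0"
  proof (cases "x = 0")
    case True
    then show ?thesis
      using assms(1) by (simp add: X_def)
  next
    case False
    then show ?thesis
      using assms(2) by (intro add_nonneg_pos) auto
  qed
  ultimately have "c^2*(x-1)^4 + k*(x-1)^2*x + x^2 \<noteq> 0"
    by auto
  then have "of_real (c^2*(x-1)^4 + k*(x-1)^2*x + x^2) \<noteq> (0::complex)"
    by (simp only: of_real_eq_0_iff not_False_eq_True)
  then show ?thesis
    unfolding z by simp
qed

lemma quartic_zeros_real:
  fixes c k :: real and z :: complex
  assumes "c \<noteq> 0" and "k \<le> 0" and "4*c^2 \<le> k^2"
    and "of_real c^2*(z-1)^4 + of_real k*(z-1)^2*z + z^2 = 0"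
  shows "z \<in> \<real>"
proof -
  define d where "d = sqrt (k^2 - 4*c^2)"
  have d: "d \<ge> 0" "d^2 = k^2 - 4*c^2"
    using assms(3) by (simp_all add: d_def)
  have "d^2 \<le> (-k)^2"
    using d(2) by simp
  then have "d \<le> -k"
    by (rule power2_le_imp_le) (use assms(2) in linarith)
  define u1 u2 where "u1 = (-k + d)/(2*c^2)" and "u2 = (-k - d)/(2*c^2)"
  have u_nonneg: "u1 \<ge> 0" "u2 \<ge> 0"
    using \<open>d \<le> -k\<close> d(1) by (simp_all add: u1_def u2_def)
  have sum: "c^2 * (u1 + u2) = -k"
    using assms(1) by (simp add: u1_def u2_def field_simps)
  have "(-k + d) * (-k - d) = 4*c^2"
    using d(2) by (simp add: algebra_simps power2_eq_square)
  then have prod: "c^2 * (u1 * u2) = 1"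
    using assms(1) by (simp add: u1_def u2_def field_simps power2_eq_square)
  have "of_real c^2 * ((z-1)^2 - of_real u1 * z) * ((z-1)^2 - of_real u2 * z) =
        of_real c^2*((z-1)^2)^2 - of_real (c^2 * (u1 + u2))*(z-1)^2*z + of_real (c^2 * (u1 * u2))*z^2"
    by (simp add: algebra_simps power2_eq_square)
  also have "\<dots> = of_real c^2*(z-1)^4 + of_real k*(z-1)^2*z + z^2"
    by (simp add: sum prod flip: power_mult)
  finally have "(z-1)^2 = of_real u1 * z \<or> (z-1)^2 = of_real u2 * z"
    using assms(1,4) by simp
  then show ?thesis
    using zero_of_quadratic_real u_nonneg by blast
qed

theorem proposition8p3:
  fixes a b :: int
  assumes "a > 0" and "b > 0"
  shows "(\<forall>z::complex. poly (map_poly of_int (alexander_poly [2*a, 2*b, -2*b, -2*a])) z = 0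
            \<longrightarrow> z \<in> \<real>) \<longleftrightarrow> a \<ge> 4 * b"
proof -
  define p where "p = map_poly (of_int :: int \<Rightarrow> complex) (alexander_poly [2*a, 2*b, -2*b, -2*a])"
  define c k :: real where "c = of_int (a*b)" and "k = of_int (2*a*b - a^2)"
  have c: "c \<noteq> 0"
    using assms by (simp add: c_def k_def)
  have p_eval: "poly p z = of_real c^2*(z-1)^4 + of_real k*(z-1)^2*z + z^2" for z
    unfolding p_def alexander_poly_2a_2b c_def k_def
    by (simp add: map_poly_pCons algebra_simps power2_eq_square power4_eq_xxxx)
  have disc: "k^2 - 4*c^2 = of_int (a^3 * (a - 4*b))"
    unfolding c_def k_def by (simp add: algebra_simps power2_eq_square power3_eq_cube)
  show ?thesis
    unfolding p_def[symmetric]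
  proof
    assume real_zeros: "\<forall>z. poly p z = 0 \<longrightarrow> z \<in> \<real>"
    have "degree p = 4"
      unfolding p_def alexander_poly_2a_2b using assms by (simp add: map_poly_pCons)
    then obtain z where z: "poly p z = 0"
      using fundamental_theorem_of_algebra[of p] constant_degree[of p] by auto
    with real_zeros have "z \<in> \<real>"
      by blast
    with z have "\<not> k^2 < 4*c^2"
      using quartic_no_real_zero[OF c] unfolding p_eval by blast
    then have "(0::real) \<le> of_int (a^3 * (a - 4*b))"
      using disc by linarith
    then show "a \<ge> 4*b"
      using assms(1) by (simp add: zero_le_mult_iff)
  next
    assume "a \<ge> 4*b"
    then have "(0::real) \<le> of_int (a^3 * (a - 4*b))"
      using assms(1) by simp
    then have "4*c^2 \<le> k^2"
      using disc by linarith
    moreover have "k \<le> 0"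
    proof -
      have "2*a*b - a^2 = a * (2*b - a)"
        by (simp add: algebra_simps power2_eq_square)
      also have "\<dots> \<le> 0"
        using \<open>a \<ge> 4*b\<close> assms by (intro mult_nonneg_nonpos) auto
      finally show ?thesis
        unfolding k_def by (simp only: of_int_le_0_iff)
    qed
    ultimately show "\<forall>z. poly p z = 0 \<longrightarrow> z \<in> \<real>"
      unfolding p_eval using quartic_zeros_real[OF c] by blast
  qed
qed

end
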